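(* Let $X$ be a random variable taking values in a set $\mathcal{X}$, $Y \in [0,1]$ a target outcome and $\hat{Y} \in [0,1]$ an expert prediction, all jointly distributed. Let $\mathcal{F}^{\text{binary}}$ be a class of functions $\mathcal{X} \to \{0,1\}$, let $\alpha \ge 0$, and let $S_1, \dots, S_K$ be an $\alpha$-multicalibrated partition with respect to $\mathcal{F}^{\text{binary}}$ and $Y$. Suppose that for every $k \in [K]$ there exists $\tilde{f}_k \in \mathcal{F}^{\text{binary}}$ such that $Y$ and $\hat{Y}$ are conditionally independent given $\tilde{f}_k(X)$ and the event $X \in S_k$. Then for all $k \in [K]$, $$\left|\mathrm{Cov}_k(Y, \hat{Y})\right| \le \sqrt{\frac{\alpha}{2}}.$$
   Context: $\mathrm{Cov}_k$ denotes covariance conditional on $\{X \in S_k\}$ (assumed to have positive probability). A set $S \subseteq \mathcal{X}$ is $\alpha$-indistinguishable with respect to a function class $\mathcal{F}$ and target $Y$ if $|\mathrm{Cov}(f(X), Y \mid X \in S)| \le \alpha$ for all $f \in \mathcal{F}$. Sets $S_1, \dots, S_K$ form an $\alpha$-multicalibrated partition with respect to $\mathcal{F}$ and $Y$ if they partition $\mathcal{X}$ and each $S_k$ is $\alpha$-indistinguishable with respect to $\mathcal{F}$ and $Y$. *)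

theory Defs
  imports "HOL-Probability.Probability"
begin

definition cond_expect_ev :: "'a measure \<Rightarrow> 'a set \<Rightarrow> ('a \<Rightarrow> real) \<Rightarrow> real" where
  "cond_expect_ev M E Z = (\<integral>\<omega>. indicator E \<omega> * Z \<omega> \<partial>M) / measure M E"

definition cond_cov :: "'a measure \<Rightarrow> 'a set \<Rightarrow> ('a \<Rightarrow> real) \<Rightarrow> ('a \<Rightarrow> real) \<Rightarrow> real" where
  "cond_cov M E A B =
     cond_expect_ev M E (\<lambda>\<omega>. A \<omega> * B \<omega>) - cond_expect_ev M E A * cond_expect_ev M E B"

definition ev_in :: "'a measure \<Rightarrow> ('a \<Rightarrow> 'x) \<Rightarrow> 'x set \<Rightarrow> 'a set" where
  "ev_in M X S = {\<omega> \<in> space M. X \<omega> \<in> S}"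

definition indist :: "'a measure \<Rightarrow> ('a \<Rightarrow> 'x) \<Rightarrow> ('a \<Rightarrow> real) \<Rightarrow> ('x \<Rightarrow> real) set \<Rightarrow> real \<Rightarrow> 'x set \<Rightarrow> bool" where
  "indist M X Y F \<alpha> S \<longleftrightarrow> (\<forall>f\<in>F. \<bar>cond_cov M (ev_in M X S) (\<lambda>\<omega>. f (X \<omega>)) Y\<bar> \<le> \<alpha>)"

definition multical_partition ::
  "'a measure \<Rightarrow> 'x measure \<Rightarrow> ('a \<Rightarrow> 'x) \<Rightarrow> ('a \<Rightarrow> real) \<Rightarrow> ('x \<Rightarrow> real) set \<Rightarrow> real
     \<Rightarrow> nat \<Rightarrow> (nat \<Rightarrow> 'x set) \<Rightarrow> bool" where
  "multical_partition M N X Y F \<alpha> K S \<longleftrightarrow>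
     (\<forall>k\<in>{1..K}. S k \<in> sets N) \<and>
     (\<Union>k\<in>{1..K}. S k) = space N \<and>
     (\<forall>j\<in>{1..K}. \<forall>k\<in>{1..K}. j \<noteq> k \<longrightarrow> S j \<inter> S k = {}) \<and>
     (\<forall>k\<in>{1..K}. indist M X Y F \<alpha> (S k))"

definition cond_indep_given ::
  "'a measure \<Rightarrow> ('a \<Rightarrow> real) \<Rightarrow> ('a \<Rightarrow> real) \<Rightarrow> ('a \<Rightarrow> real) \<Rightarrow> 'a set \<Rightarrow> bool" where
  "cond_indep_given M A B G E \<longleftrightarrow>
     (\<forall>g U V. U \<in> sets borel \<longrightarrow> V \<in> sets borel \<longrightarrow>
        (let C = {\<omega> \<in> space M. G \<omega> = g} \<inter> E in
          measure M ({\<omega>\<in>space M. A \<omega> \<in> U \<and> B \<omega> \<in> V} \<inter> C) * measure M C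
          = measure M ({\<omega>\<in>space M. A \<omega> \<in> U} \<inter> C) * measure M ({\<omega>\<in>space M. B \<omega> \<in> V} \<inter> C)))"

end

theory Submission
  imports Defs
begin

(* Split the cell S_k by the value of the binary feature B = f(X) into C_0 and C_1, and write
   p_i = P(C_i) and a_i, b_i, c_i for the integrals of Y, Yhat and Y * Yhat over C_i. Conditional
   independence on C_i says c_i p_i = a_i b_i, and then, with p = p_0 + p_1,
     p_0 p_1 p^2 Cov_k(Y, Yhat) = (p_0 a_1 - p_1 a_0) (p_0 b_1 - p_1 b_0),
     p^2 Cov_k(B, Y) = p_0 a_1 - p_1 a_0.
   Both differences are bounded by p_0 p_1 <= p^2 / 4, so Cov_k(Y, Yhat)^2 <= |Cov_k(B, Y)| / 4,
   and |Cov_k(B, Y)| <= alpha by multicalibration. *)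

lemma cond_expect_ev_cong:
  assumes "\<And>\<omega>. \<omega> \<in> E \<Longrightarrow> A \<omega> = A' \<omega>"
  shows "cond_expect_ev M E A = cond_expect_ev M E A'"
proof -
  have "(\<lambda>\<omega>. indicator E \<omega> * A \<omega>) = (\<lambda>\<omega>. indicator E \<omega> * A' \<omega>)"
    using assms by (auto split: split_indicator)
  then show ?thesis unfolding cond_expect_ev_def by simp
qed

lemma cond_cov_cong_left:
  assumes "\<And>\<omega>. \<omega> \<in> E \<Longrightarrow> A \<omega> = A' \<omega>"
  shows "cond_cov M E A B = cond_cov M E A' B"
  unfolding cond_cov_def using assms
  by (simp add: cond_expect_ev_cong[of E A A'] cond_expect_ev_cong[of E "\<lambda>\<omega>. A \<omega> * B \<omega>" "\<lambda>\<omega>. A' \<omega> * B \<omega>"])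

lemma cond_cov_eq:
  "cond_cov M E A B =
     (measure M E * (\<integral>\<omega>. indicator E \<omega> * (A \<omega> * B \<omega>) \<partial>M)
       - (\<integral>\<omega>. indicator E \<omega> * A \<omega> \<partial>M) * (\<integral>\<omega>. indicator E \<omega> * B \<omega> \<partial>M)) / (measure M E)\<^sup>2"
  by (cases "measure M E = 0") (simp_all add: cond_cov_def cond_expect_ev_def field_simps power2_eq_square)

lemma abs_cross_diff_le:
  fixes p0 p1 a0 a1 :: real
  assumes "0 \<le> a0" "a0 \<le> p0" "0 \<le> a1" "a1 \<le> p1"
  shows "\<bar>p0 * a1 - p1 * a0\<bar> \<le> p0 * p1"
proof -
  have "p0 * a1 \<le> p0 * p1" "p1 * a0 \<le> p1 * p0" "0 \<le> p0 * a1" "0 \<le> p1 * a0"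
    using assms by (simp_all add: mult_left_mono)
  then show ?thesis by (simp add: abs_le_iff mult.commute)
qed

lemma two_cell_cov_numerator_le:
  fixes p0 p1 a0 a1 b0 b1 c0 c1 :: real
  assumes a: "0 \<le> a0" "a0 \<le> p0" "0 \<le> a1" "a1 \<le> p1"
    and b: "0 \<le> b0" "b0 \<le> p0" "0 \<le> b1" "b1 \<le> p1"
    and c: "0 \<le> c0" "c0 \<le> p0" "0 \<le> c1" "c1 \<le> p1"
    and prod: "c0 * p0 = a0 * b0" "c1 * p1 = a1 * b1"
  shows "\<bar>(p0 + p1) * (c0 + c1) - (a0 + a1) * (b0 + b1)\<bar> \<le> \<bar>p0 * a1 - p1 * a0\<bar>"
proof (cases "p0 = 0 \<or> p1 = 0")
  case True
  then have "(p0 + p1) * (c0 + c1) - (a0 + a1) * (b0 + b1) = 0"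
    using a b c prod by (auto simp: mult.commute)
  then show ?thesis by simp
next
  case False
  then have p: "p0 * p1 > 0" using a by (simp add: less_le)
  have "p0 * p1 * ((p0 + p1) * (c0 + c1) - (a0 + a1) * (b0 + b1))
      = (p0 * a1 - p1 * a0) * (p0 * b1 - p1 * b0)"
    using prod by algebra
  then have "p0 * p1 * \<bar>(p0 + p1) * (c0 + c1) - (a0 + a1) * (b0 + b1)\<bar>
      = \<bar>p0 * a1 - p1 * a0\<bar> * \<bar>p0 * b1 - p1 * b0\<bar>"
    using p by (metis abs_mult abs_of_pos)
  also have "\<dots> \<le> p0 * p1 * \<bar>p0 * a1 - p1 * a0\<bar>"
    using mult_left_mono[OF abs_cross_diff_le[OF b] abs_ge_zero[of "p0 * a1 - p1 * a0"]]
    by (simp add: mult.commute)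
  finally show ?thesis using p by (simp only: mult_le_cancel_left_pos)
qed

lemma two_cell_cov_le:
  fixes p0 p1 a0 a1 b0 b1 c0 c1 :: real
  assumes a: "0 \<le> a0" "a0 \<le> p0" "0 \<le> a1" "a1 \<le> p1"
    and b: "0 \<le> b0" "b0 \<le> p0" "0 \<le> b1" "b1 \<le> p1"
    and c: "0 \<le> c0" "c0 \<le> p0" "0 \<le> c1" "c1 \<le> p1"
    and prod: "c0 * p0 = a0 * b0" "c1 * p1 = a1 * b1"
  shows "\<bar>((p0 + p1) * (c0 + c1) - (a0 + a1) * (b0 + b1)) / (p0 + p1)\<^sup>2\<bar>
    \<le> sqrt (\<bar>((p0 + p1) * a1 - p1 * (a0 + a1)) / (p0 + p1)\<^sup>2\<bar> / 4)"
proof -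
  define d where "d = \<bar>p0 * a1 - p1 * a0\<bar> / (p0 + p1)\<^sup>2"
  have "(p0 + p1) * a1 - p1 * (a0 + a1) = p0 * a1 - p1 * a0" by algebra
  then have rhs: "\<bar>((p0 + p1) * a1 - p1 * (a0 + a1)) / (p0 + p1)\<^sup>2\<bar> = d"
    by (simp add: d_def)
  have "4 * (p0 * p1) \<le> (p0 + p1)\<^sup>2"
    using sum_squares_ge_zero[of "p0 - p1" 0] by (simp add: power2_eq_square algebra_simps)
  then have d_le: "d \<le> 1 / 4"
    using abs_cross_diff_le[OF a] by (simp add: d_def divide_le_eq)
  have "(((p0 + p1) * (c0 + c1) - (a0 + a1) * (b0 + b1)) / (p0 + p1)\<^sup>2)\<^sup>2 \<le> d\<^sup>2"
    unfolding d_def power_divide power2_abs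
    using two_cell_cov_numerator_le[OF a b c prod]
    by (intro divide_right_mono) (simp_all add: abs_le_square_iff)
  also have "\<dots> \<le> d / 4"
    using mult_left_mono[OF d_le, of d] by (simp add: power2_eq_square d_def)
  finally show ?thesis
    unfolding rhs by (metis power2_abs real_le_rsqrt)
qed

lemma (in prob_space) indep_varI_preimages:
  assumes X: "random_variable S X" and Y: "random_variable T Y"
    and prod: "\<And>A B. A \<in> sets S \<Longrightarrow> B \<in> sets T \<Longrightarrow>
      prob (X -` A \<inter> Y -` B \<inter> space M) = prob (X -` A \<inter> space M) * prob (Y -` B \<inter> space M)"
  shows "indep_var S X T Y"
proof -
  have "indep_set {X -` A \<inter> space M | A. A \<in> sets S} {Y -` B \<inter> space M | B. B \<in> sets T}"
    unfolding indep_sets2_eq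
  proof (intro conjI ballI)
    show "{X -` A \<inter> space M | A. A \<in> sets S} \<subseteq> events"
      using X by (auto simp: measurable_sets)
    show "{Y -` B \<inter> space M | B. B \<in> sets T} \<subseteq> events"
      using Y by (auto simp: measurable_sets)
    fix a b assume "a \<in> {X -` A \<inter> space M | A. A \<in> sets S}" "b \<in> {Y -` B \<inter> space M | B. B \<in> sets T}"
    then obtain A B where "A \<in> sets S" "a = X -` A \<inter> space M" "B \<in> sets T" "b = Y -` B \<inter> space M"
      by blast
    moreover have "X -` A \<inter> space M \<inter> (Y -` B \<inter> space M) = X -` A \<inter> Y -` B \<inter> space M"
      by blast
    ultimately show "prob (a \<inter> b) = prob a * prob b" using prod by simp
  qed
  moreover have "(\<lambda>i. {case_bool X Y i -` A \<inter> space M | A. A \<in> sets (case_bool S T i)})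
      = case_bool {X -` A \<inter> space M | A. A \<in> sets S} {Y -` B \<inter> space M | B. B \<in> sets T}"
    by (rule ext) (simp split: bool.split)
  ultimately show ?thesis
    using X Y unfolding indep_var_def indep_vars_def2 indep_set_def by (simp split: bool.split)
qed

lemma uniform_measure_eq_density_real:
  assumes "0 < measure M C"
  shows "uniform_measure M C = density M (\<lambda>x. ennreal (indicator C x / measure M C))"
proof -
  have C: "C \<in> sets M" using assms measure_notin_sets by force
  have "emeasure M C \<noteq> top" using assms measure_zero_top by force
  then have em: "emeasure M C = ennreal (measure M C)" by (rule emeasure_eq_ennreal_measure)
  show ?thesis
    unfolding uniform_measure_def
  proof (rule density_cong)
    show "(\<lambda>x. indicator C x / emeasure M C) \<in> borel_measurable M" using C by measurable
    show "(\<lambda>x. ennreal (indicator C x / measure M C)) \<in> borel_measurable M" using C by measurable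
    show "AE x in M. indicator C x / emeasure M C = ennreal (indicator C x / measure M C)"
      using assms by (auto simp: em indicator_def divide_ennreal[symmetric])
  qed
qed

lemma
  fixes g :: "'a \<Rightarrow> real"
  assumes C: "0 < measure M C" and g: "g \<in> borel_measurable M"
  shows integral_uniform_measure:
      "(\<integral>x. g x \<partial>uniform_measure M C) = (\<integral>x. indicator C x * g x \<partial>M) / measure M C"
    and integrable_uniform_measure:
      "integrable M g \<Longrightarrow> integrable (uniform_measure M C) g"
proof -
  have C_sets: "C \<in> sets M" using C measure_notin_sets by force
  then have dens: "(\<lambda>x. indicator C x / measure M C) \<in> borel_measurable M" by measurable
  have "(\<integral>x. g x \<partial>uniform_measure M C) = (\<integral>x. (indicator C x / measure M C) *\<^sub>R g x \<partial>M)"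
    unfolding uniform_measure_eq_density_real[OF C] using C by (intro integral_density g dens) auto
  also have "\<dots> = (\<integral>x. indicator C x * g x / measure M C \<partial>M)" by simp
  finally show "(\<integral>x. g x \<partial>uniform_measure M C) = (\<integral>x. indicator C x * g x \<partial>M) / measure M C"
    by simp
  show "integrable (uniform_measure M C) g" if "integrable M g"
  proof -
    have "integrable M (\<lambda>x. indicator C x *\<^sub>R g x / measure M C)"
      using C_sets that by (intro integrable_divide_zero integrable_mult_indicator)
    then show ?thesis
      unfolding uniform_measure_eq_density_real[OF C] using C
      by (subst integrable_density[OF g dens]) auto
  qed
qed

lemma (in prob_space) integral_indicator_mult_if_cond_indep:
  fixes Y Z :: "'a \<Rightarrow> real"
  assumes C: "C \<in> events" and Y: "integrable M Y" and Z: "integrable M Z"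
    and indep: "\<And>U V. U \<in> sets borel \<Longrightarrow> V \<in> sets borel \<Longrightarrow>
      prob ({\<omega> \<in> space M. Y \<omega> \<in> U \<and> Z \<omega> \<in> V} \<inter> C) * prob C
      = prob ({\<omega> \<in> space M. Y \<omega> \<in> U} \<inter> C) * prob ({\<omega> \<in> space M. Z \<omega> \<in> V} \<inter> C)"
  shows "(\<integral>\<omega>. indicator C \<omega> * (Y \<omega> * Z \<omega>) \<partial>M) * prob C
    = (\<integral>\<omega>. indicator C \<omega> * Y \<omega> \<partial>M) * (\<integral>\<omega>. indicator C \<omega> * Z \<omega> \<partial>M)"
proof (cases "prob C = 0")
  case True
  then have "AE \<omega> in M. \<omega> \<notin> C" using C prob_eq_0 by blast
  then have "AE \<omega> in M. indicator C \<omega> * Y \<omega> = 0" by eventually_elim simp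
  then have "(\<integral>\<omega>. indicator C \<omega> * Y \<omega> \<partial>M) = 0" by (rule integral_eq_zero_AE)
  with True show ?thesis by simp
next
  case False
  then have pos: "0 < prob C" using measure_nonneg less_le by metis
  let ?MC = "uniform_measure M C"
  have em: "emeasure M C \<noteq> 0" "emeasure M C \<noteq> \<infinity>"
    using pos by (simp_all add: emeasure_eq_measure)
  interpret MC: prob_space ?MC using em by (rule prob_space_uniform_measure)
  have meas: "Y \<in> borel_measurable M" "Z \<in> borel_measurable M" using Y Z by auto
  have "MC.indep_var borel Y borel Z"
  proof (rule MC.indep_varI_preimages)
    show "Y \<in> borel_measurable ?MC" "Z \<in> borel_measurable ?MC"
      using meas by (simp_all add: measurable_cong_sets[OF sets_uniform_measure refl])
    fix U V :: "real set" assume UV: "U \<in> sets borel" "V \<in> sets borel"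
    have sets: "Y -` U \<inter> Z -` V \<inter> space M \<in> events" "Y -` U \<inter> space M \<in> events"
      "Z -` V \<inter> space M \<in> events"
      using UV meas by (auto intro: measurable_sets)
    have "{\<omega> \<in> space M. Y \<omega> \<in> U \<and> Z \<omega> \<in> V} = Y -` U \<inter> Z -` V \<inter> space M"
      "{\<omega> \<in> space M. Y \<omega> \<in> U} = Y -` U \<inter> space M" "{\<omega> \<in> space M. Z \<omega> \<in> V} = Z -` V \<inter> space M"
      by auto
    then show "MC.prob (Y -` U \<inter> Z -` V \<inter> space ?MC)
        = MC.prob (Y -` U \<inter> space ?MC) * MC.prob (Z -` V \<inter> space ?MC)"
      using indep[OF UV] sets em pos by (simp add: Int_commute field_simps)
  qed
  then have "(\<integral>\<omega>. Y \<omega> * Z \<omega> \<partial>?MC) = (\<integral>\<omega>. Y \<omega> \<partial>?MC) * (\<integral>\<omega>. Z \<omega> \<partial>?MC)"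
    using Y Z pos by (intro MC.indep_var_lebesgue_integral integrable_uniform_measure) auto
  then show ?thesis
    using pos meas by (simp add: integral_uniform_measure field_simps)
qed

lemma (in prob_space)
  fixes W :: "'a \<Rightarrow> real"
  assumes C: "C \<in> events" and W: "W \<in> borel_measurable M" "\<forall>\<omega>\<in>space M. W \<omega> \<in> {0..1}"
  shows integral_indicator_mult_nonneg: "0 \<le> (\<integral>\<omega>. indicator C \<omega> * W \<omega> \<partial>M)"
    and integral_indicator_mult_le_prob: "(\<integral>\<omega>. indicator C \<omega> * W \<omega> \<partial>M) \<le> prob C"
proof -
  show "0 \<le> (\<integral>\<omega>. indicator C \<omega> * W \<omega> \<partial>M)"
    using W by (intro Bochner_Integration.integral_nonneg) auto
  have "(\<integral>\<omega>. indicator C \<omega> * W \<omega> \<partial>M) \<le> (\<integral>\<omega>. indicator C \<omega> \<partial>M)"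
    using C W by (intro integral_mono' integrable_real_indicator)
      (auto simp: emeasure_eq_measure split: split_indicator)
  then show "(\<integral>\<omega>. indicator C \<omega> * W \<omega> \<partial>M) \<le> prob C"
    using C by (simp add: Int_absorb2)
qed

lemma (in prob_space) cond_cov_two_cells_le:
  fixes Y Z :: "'a \<Rightarrow> real"
  assumes C: "C0 \<in> events" "C1 \<in> events" "C0 \<inter> C1 = {}"
    and Y: "Y \<in> borel_measurable M" "\<forall>\<omega>\<in>space M. Y \<omega> \<in> {0..1}"
    and Z: "Z \<in> borel_measurable M" "\<forall>\<omega>\<in>space M. Z \<omega> \<in> {0..1}"
    and cells: "\<And>C. C \<in> {C0, C1} \<Longrightarrow> (\<integral>\<omega>. indicator C \<omega> * (Y \<omega> * Z \<omega>) \<partial>M) * prob C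
      = (\<integral>\<omega>. indicator C \<omega> * Y \<omega> \<partial>M) * (\<integral>\<omega>. indicator C \<omega> * Z \<omega> \<partial>M)"
  shows "\<bar>cond_cov M (C0 \<union> C1) Y Z\<bar> \<le> sqrt (\<bar>cond_cov M (C0 \<union> C1) (indicator C1) Y\<bar> / 4)"
proof -
  define I where "I C W = (\<integral>\<omega>. indicator C \<omega> * W \<omega> \<partial>M)" for C and W :: "'a \<Rightarrow> real"
  have YZ: "(\<lambda>\<omega>. Y \<omega> * Z \<omega>) \<in> borel_measurable M" "\<forall>\<omega>\<in>space M. Y \<omega> * Z \<omega> \<in> {0..1}"
    using Y Z by (auto intro: mult_le_one)
  have split: "I (C0 \<union> C1) W = I C0 W + I C1 W"
    if "W \<in> borel_measurable M" "\<forall>\<omega>\<in>space M. W \<omega> \<in> {0..1}" for W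
  proof -
    have W: "integrable M W" using that by (intro integrable_const_bound[where B=1]) auto
    have "integrable M (\<lambda>\<omega>. indicator C \<omega> * W \<omega>)" if "C \<in> events" for C
      using integrable_mult_indicator[OF that W] by simp
    then show ?thesis
      unfolding I_def using C
      by (simp add: indicator_disj_union distrib_right Bochner_Integration.integral_add)
  qed
  have "I (C0 \<union> C1) (\<lambda>\<omega>. indicator C1 \<omega> * Y \<omega>) = I C1 Y"
    unfolding I_def by (intro Bochner_Integration.integral_cong) (auto split: split_indicator)
  moreover have "I (C0 \<union> C1) (indicator C1) = prob C1"
    unfolding I_def using C by (simp add: indicator_inter_arith[symmetric] Int_absorb1 Int_absorb2)
  moreover have "prob (C0 \<union> C1) = prob C0 + prob C1"
    using C by (rule finite_measure_Union)
  moreover have "I C (\<lambda>\<omega>. Y \<omega> * Z \<omega>) * prob C = I C Y * I C Z" if "C \<in> {C0, C1}" for C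
    using cells[OF that] unfolding I_def .
  moreover note bounds = integral_indicator_mult_nonneg integral_indicator_mult_le_prob
  ultimately show ?thesis
    unfolding cond_cov_eq I_def[symmetric] split[OF Y] split[OF Z] split[OF YZ]
    using two_cell_cov_le[of "I C0 Y" "prob C0" "I C1 Y" "prob C1" "I C0 Z" "I C1 Z"
        "I C0 (\<lambda>\<omega>. Y \<omega> * Z \<omega>)" "I C1 (\<lambda>\<omega>. Y \<omega> * Z \<omega>)"]
    using bounds[OF C(1) Y] bounds[OF C(2) Y] bounds[OF C(1) Z] bounds[OF C(2) Z]
      bounds[OF C(1) YZ] bounds[OF C(2) YZ]
    by (simp add: I_def)
qed

lemma (in prob_space) cond_cov_le_if_cond_indep_binary:
  fixes B Y Z :: "'a \<Rightarrow> real"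
  assumes E: "E \<in> events"
    and B: "B \<in> borel_measurable M" "\<forall>\<omega>\<in>space M. B \<omega> \<in> {0, 1}"
    and Y: "Y \<in> borel_measurable M" "\<forall>\<omega>\<in>space M. Y \<omega> \<in> {0..1}"
    and Z: "Z \<in> borel_measurable M" "\<forall>\<omega>\<in>space M. Z \<omega> \<in> {0..1}"
    and indep: "cond_indep_given M Y Z B E"
  shows "\<bar>cond_cov M E Y Z\<bar> \<le> sqrt (\<bar>cond_cov M E B Y\<bar> / 4)"
proof -
  define C where "C g = {\<omega> \<in> space M. B \<omega> = g} \<inter> E" for g
  have C_sets: "C g \<in> events" for g
    unfolding C_def using E B by measurable
  have E_split: "E = C 0 \<union> C 1" "C 0 \<inter> C 1 = {}"
    using B sets.sets_into_space[OF E] unfolding C_def by auto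
  have "cond_cov M E B Y = cond_cov M E (indicator (C 1)) Y"
    using B sets.sets_into_space[OF E]
    by (intro cond_cov_cong_left) (auto simp: C_def split: split_indicator)
  moreover have "(\<integral>\<omega>. indicator (C g) \<omega> * (Y \<omega> * Z \<omega>) \<partial>M) * prob (C g)
      = (\<integral>\<omega>. indicator (C g) \<omega> * Y \<omega> \<partial>M) * (\<integral>\<omega>. indicator (C g) \<omega> * Z \<omega> \<partial>M)" for g
    using C_sets Y Z indep
    by (intro integral_indicator_mult_if_cond_indep integrable_const_bound[where B=1])
      (auto simp: cond_indep_given_def C_def Let_def)
  ultimately show ?thesis
    unfolding E_split(1) using C_sets E_split(2) Y Z
    by (auto intro: cond_cov_two_cells_le)
qed

lemma ev_in_sets:
  assumes "X \<in> measurable M N" "S \<in> sets N"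
  shows "ev_in M X S \<in> sets M"
proof -
  have "ev_in M X S = X -` S \<inter> space M" by (auto simp: ev_in_def)
  then show ?thesis using assms by (simp add: measurable_sets)
qed

theorem theorem2:
  fixes M :: "'a measure" and N :: "'x measure"
    and X :: "'a \<Rightarrow> 'x" and Y Yhat :: "'a \<Rightarrow> real"
    and F :: "('x \<Rightarrow> real) set" and \<alpha> :: real
    and K :: nat and S :: "nat \<Rightarrow> 'x set"
  assumes "prob_space M"
    and "X \<in> measurable M N"
    and "Y \<in> borel_measurable M" and "Yhat \<in> borel_measurable M"
    and "\<forall>\<omega>\<in>space M. Y \<omega> \<in> {0..1}"
    and "\<forall>\<omega>\<in>space M. Yhat \<omega> \<in> {0..1}"
    and "\<forall>f\<in>F. f \<in> borel_measurable N \<and> (\<forall>x. f x \<in> {0, 1})"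
    and "\<alpha> \<ge> 0"
    and "multical_partition M N X Y F \<alpha> K S"
    and "\<forall>k\<in>{1..K}. measure M (ev_in M X (S k)) > 0"
    and "\<forall>k\<in>{1..K}. \<exists>f\<in>F. cond_indep_given M Y Yhat (\<lambda>\<omega>. f (X \<omega>)) (ev_in M X (S k))"
  shows "\<forall>k\<in>{1..K}. \<bar>cond_cov M (ev_in M X (S k)) Y Yhat\<bar> \<le> sqrt (\<alpha> / 2)"
proof
  interpret prob_space M by fact
  fix k assume k: "k \<in> {1..K}"
  obtain f where f: "f \<in> F"
    and indep: "cond_indep_given M Y Yhat (\<lambda>\<omega>. f (X \<omega>)) (ev_in M X (S k))"
    using assms(11) k by blast
  have "ev_in M X (S k) \<in> events"
    using assms(2,9) k unfolding multical_partition_def by (auto intro: ev_in_sets)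
  then have "\<bar>cond_cov M (ev_in M X (S k)) Y Yhat\<bar>
      \<le> sqrt (\<bar>cond_cov M (ev_in M X (S k)) (\<lambda>\<omega>. f (X \<omega>)) Y\<bar> / 4)"
    using assms(2-7) f indep
    by (intro cond_cov_le_if_cond_indep_binary) (auto intro: measurable_compose)
  also have "\<dots> \<le> sqrt (\<alpha> / 2)"
  proof -
    have "\<bar>cond_cov M (ev_in M X (S k)) (\<lambda>\<omega>. f (X \<omega>)) Y\<bar> \<le> \<alpha>"
      using assms(9) k f unfolding multical_partition_def indist_def by auto
    then show ?thesis using assms(8) by simp
  qed
  finally show "\<bar>cond_cov M (ev_in M X (S k)) Y Yhat\<bar> \<le> sqrt (\<alpha> / 2)" .
qed

end
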